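(* Let $K$ be a real biquadratic field with $\operatorname{sgnrk}(K)\le 3$. Then $N_{K/\mathbb{Q}}(\eta)=1$ for every $\eta\in\mathcal{O}_K^\times$.
   Context: A real biquadratic field is $K=\mathbb{Q}(\sqrt{D_1},\sqrt{D_2})$ of degree $4$ with $D_1,D_2>1$ squarefree integers (so $K$ is totally real). For $\alpha\in K^\times$, $\operatorname{sgn}(\alpha)\in\mathbb{F}_2^4$ records the signs of its four real embeddings ($0$ for positive, $1$ for negative). $\operatorname{sgnrk}(K)$ is the $\mathbb{F}_2$-dimension of the unit signature group $\{\operatorname{sgn}(\eta):\eta\in\mathcal{O}_K^\times\}$. *)

theory Defs
  imports "HOL-Computational_Algebra.Computational_Algebra" Complex_Main
begin

text \<open>A real biquadratic field K = Q(sqrt D1, sqrt D2): D1, D2 > 1 squarefree and distinct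
  (which is exactly the condition for [K:Q] = 4).\<close>
definition real_biquadratic :: "int \<Rightarrow> int \<Rightarrow> bool" where
  "real_biquadratic D1 D2 \<longleftrightarrow> D1 > 1 \<and> D2 > 1 \<and> squarefree D1 \<and> squarefree D2 \<and> D1 \<noteq> D2"

definition sg :: "bool \<Rightarrow> real" where
  "sg b = (if b then 1 else -1)"

text \<open>Elements of K are written uniquely as a + b sqrt D1 + c sqrt D2 + d sqrt D1 sqrt D2 with
  a,b,c,d rational.  The four real embeddings are indexed by (s,t) :: bool \<times> bool, sending
  sqrt D1 to sg s * sqrt D1 and sqrt D2 to sg t * sqrt D2; (True,True) is the identity
  embedding K \<subseteq> \<real>.\<close>
definition bq_emb :: "int \<Rightarrow> int \<Rightarrow> bool \<times> bool \<Rightarrow> rat \<times> rat \<times> rat \<times> rat \<Rightarrow> real" where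
  "bq_emb D1 D2 st q = (case q of (a, b, c, d) \<Rightarrow>
     of_rat a + sg (fst st) * of_rat b * sqrt (of_int D1)
     + sg (snd st) * of_rat c * sqrt (of_int D2)
     + sg (fst st) * sg (snd st) * of_rat d * sqrt (of_int D1) * sqrt (of_int D2))"

definition bq_unit :: "int \<Rightarrow> int \<Rightarrow> rat \<times> rat \<times> rat \<times> rat \<Rightarrow> bool" where
  "bq_unit D1 D2 q \<longleftrightarrow> (let x = bq_emb D1 D2 (True, True) q in
      x \<noteq> 0 \<and> algebraic_int x \<and> algebraic_int (inverse x))"

definition bq_norm :: "int \<Rightarrow> int \<Rightarrow> rat \<times> rat \<times> rat \<times> rat \<Rightarrow> real" where
  "bq_norm D1 D2 q = (\<Prod>st\<in>(UNIV :: (bool \<times> bool) set). bq_emb D1 D2 st q)"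

text \<open>Signature in F_2^4, modelled as a function from the four embeddings to bool
  (True = 1 = negative, False = 0 = positive); addition in F_2^4 is pointwise xor.\<close>
definition bq_sgn :: "int \<Rightarrow> int \<Rightarrow> rat \<times> rat \<times> rat \<times> rat \<Rightarrow> (bool \<times> bool \<Rightarrow> bool)" where
  "bq_sgn D1 D2 q = (\<lambda>st. bq_emb D1 D2 st q < 0)"

definition unit_sgn_group :: "int \<Rightarrow> int \<Rightarrow> (bool \<times> bool \<Rightarrow> bool) set" where
  "unit_sgn_group D1 D2 = bq_sgn D1 D2 ` {q. bq_unit D1 D2 q}"

text \<open>F_2-linear span of a set of vectors in F_2^I: all sums (xor) of finite subsets.\<close>
definition f2_span :: "('i \<Rightarrow> bool) set \<Rightarrow> ('i \<Rightarrow> bool) set" where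
  "f2_span S = {(\<lambda>i. odd (card {v\<in>T. v i})) | T. T \<subseteq> S \<and> finite T}"

definition f2_dim :: "('i \<Rightarrow> bool) set \<Rightarrow> nat" where
  "f2_dim G = (LEAST n. \<exists>S. finite S \<and> card S = n \<and> f2_span S = G)"

definition sgnrk :: "int \<Rightarrow> int \<Rightarrow> nat" where
  "sgnrk D1 D2 = f2_dim (unit_sgn_group D1 D2)"

end

theory Submission
  imports Defs "Jordan_Normal_Form.Char_Poly" "HOL-Library.Cardinality"
begin

text \<open>The norm of a unit \<open>\<eta>\<close> is a rational algebraic integer with algebraic integer inverse,
  hence \<open>\<plusminus>1\<close>, and it is negative iff an odd number of embeddings of \<open>\<eta>\<close> are negative.
  The unit signature group is closed under addition (products of units) and under the
  Galois group \<open>{\<plusminus>1}\<^sup>2\<close>, which permutes the four embeddings simply transitively, and it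
  contains \<open>(1,1,1,1)\<close>, the signature of \<open>-1\<close>. If \<open>N(\<eta>) = -1\<close>, then \<open>sgn \<eta>\<close> or
  \<open>sgn \<eta> + (1,1,1,1)\<close> has weight one, and its Galois translates span \<open>\<bbbF>\<^sub>2\<^sup>4\<close>, so the
  signature rank is 4.

  Products of algebraic integers are algebraic integers because \<open>x * y\<close> is an eigenvalue of an
  integer matrix; conjugates of units are units because \<open>1, \<surd>D\<^sub>1, \<surd>D\<^sub>2, \<surd>D\<^sub>1\<surd>D\<^sub>2\<close> are
  linearly independent over \<open>\<rat>\<close>, so that every embedding is injective.\<close>

section \<open>Algebraic integers\<close>

lemma algebraic_int_eigenvalue_of_int_matrix:
  fixes A :: "nat \<Rightarrow> nat \<Rightarrow> int" and w :: "nat \<Rightarrow> 'a::field_char_0"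
  assumes "l < N" "w l \<noteq> 0"
    and eigen: "\<And>k. k < N \<Longrightarrow> (\<Sum>l<N. of_int (A k l) * w l) = z * w k"
  shows "algebraic_int z"
proof -
  define M where "M = mat N N (\<lambda>(k, l). A k l)"
  define v where "v = vec N w"
  have M: "M \<in> carrier_mat N N" and M': "map_mat (of_int :: int \<Rightarrow> 'a) M \<in> carrier_mat N N"
    unfolding M_def by simp_all
  have "map_mat of_int M *\<^sub>v v = z \<cdot>\<^sub>v v"
    using eigen by (intro eq_vecI) (simp_all add: M_def v_def scalar_prod_def atLeast0LessThan)
  moreover have "v \<noteq> 0\<^sub>v N"
  proof
    assume "v = 0\<^sub>v N"
    then have "v $ l = 0"
      using assms(1) by simp
    then show False
      using assms(1,2) by (simp add: v_def)
  qed
  moreover have "v \<in> carrier_vec N"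
    by (simp add: v_def)
  ultimately have "eigenvalue (map_mat of_int M) z"
    unfolding eigenvalue_def eigenvector_def using M' by auto
  then have "poly (char_poly (map_mat of_int M)) z = 0"
    using eigenvalue_root_char_poly[OF M'] by simp
  then have "poly (map_poly of_int (char_poly M)) z = 0"
    using of_int_hom.char_poly_hom[OF M] by metis
  moreover have "lead_coeff (char_poly M) = 1"
    using degree_monic_char_poly[OF M] by simp
  ultimately show ?thesis
    unfolding algebraic_int_altdef_ipoly by blast
qed

lemma algebraic_int_powers_in_int_span:
  fixes x :: "'a::field_char_0"
  assumes "algebraic_int x"
  obtains n where "\<And>k. \<exists>c. x ^ k = (\<Sum>i<Suc n. of_int (c i) * x ^ i)"
proof -
  obtain p where root: "poly (map_poly of_int p) x = 0" and monic: "lead_coeff p = 1"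
    using assms unfolding algebraic_int_altdef_ipoly by blast
  have "degree p \<noteq> 0"
    using root monic by (metis degree_0_id map_poly_1 of_int_1 one_neq_zero poly_1 pCons_one)
  then obtain n where deg: "degree p = Suc n"
    using not0_implies_Suc by blast
  have "0 = (\<Sum>i\<le>Suc n. of_int (coeff p i) * x ^ i)"
    using root deg by (simp add: poly_altdef coeff_map_poly)
  also have "\<dots> = (\<Sum>i<Suc n. of_int (coeff p i) * x ^ i) + x ^ Suc n"
    using monic deg by (simp add: lessThan_Suc_atMost[symmetric])
  finally have top: "x ^ Suc n = - (\<Sum>i<Suc n. of_int (coeff p i) * x ^ i)"
    by (metis add_eq_0_iff)
  have "\<exists>c. x ^ k = (\<Sum>i<Suc n. of_int (c i) * x ^ i)" for k
  proof (induction k)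
    case 0
    show ?case
      by (rule exI[of _ "\<lambda>i. if i = 0 then 1 else 0"]) (subst sum.lessThan_Suc_shift, simp)
  next
    case (Suc k)
    then obtain c where c: "x ^ k = (\<Sum>i<Suc n. of_int (c i) * x ^ i)"
      by blast
    define c' where "c' i = (if i = 0 then 0 else c (i - 1)) - c n * coeff p i" for i
    have "x ^ Suc k = (\<Sum>i<n. of_int (c i) * x ^ Suc i) + of_int (c n) * x ^ Suc n"
      using c by (simp add: sum_distrib_left algebra_simps)
    also have "(\<Sum>i<n. of_int (c i) * x ^ Suc i)
        = (\<Sum>i<Suc n. of_int (if i = 0 then 0 else c (i - 1)) * x ^ i)"
      by (subst sum.lessThan_Suc_shift) simp
    finally have "x ^ Suc k = (\<Sum>i<Suc n. of_int (c' i) * x ^ i)"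
      unfolding top c'_def by (simp add: algebra_simps sum_distrib_left sum_subtractf)
    then show ?case
      by blast
  qed
  then show thesis
    using that by blast
qed

lemma sum_lessThan_mult_nat:
  fixes f :: "nat \<Rightarrow> 'a::comm_monoid_add"
  shows "(\<Sum>l<m * n. f l) = (\<Sum>i<m. \<Sum>j<n. f (i * n + j))"
proof -
  have "(\<Sum>l<m * n. f l) = (\<Sum>i<m. sum f {i * n..<i * n + n})"
    using sum.nat_group[of f n m] by simp
  also have "\<dots> = (\<Sum>i<m. \<Sum>j<n. f (i * n + j))"
  proof (rule sum.cong[OF refl])
    fix i
    show "sum f {i * n..<i * n + n} = (\<Sum>j<n. f (i * n + j))"
      using sum.shift_bounds_nat_ivl[of f 0 "i * n" n] by (simp add: atLeast0LessThan add.commute)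
  qed
  finally show ?thesis .
qed

lemma algebraic_int_mult:
  fixes x y :: "'a::field_char_0"
  assumes "algebraic_int x" "algebraic_int y"
  shows "algebraic_int (x * y)"
proof -
  obtain m where "\<And>k. \<exists>c. x ^ k = (\<Sum>i<Suc m. of_int (c i) * x ^ i)"
    using algebraic_int_powers_in_int_span[OF assms(1)] by blast
  then obtain C where C: "\<And>k. x ^ k = (\<Sum>i<Suc m. of_int (C k i) * x ^ i)"
    by metis
  obtain n where "\<And>k. \<exists>c. y ^ k = (\<Sum>j<Suc n. of_int (c j) * y ^ j)"
    using algebraic_int_powers_in_int_span[OF assms(2)] by blast
  then obtain D where D: "\<And>k. y ^ k = (\<Sum>j<Suc n. of_int (D k j) * y ^ j)"
    by metis
  text \<open>Multiplication by \<open>x * y\<close> maps the \<open>\<int>\<close>-span of the monomials \<open>x ^ i * y ^ j\<close>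
    (\<open>i \<le> m\<close>, \<open>j \<le> n\<close>), enumerated by \<open>i * Suc n + j\<close>, to itself.\<close>
  define w where "w l = x ^ (l div Suc n) * y ^ (l mod Suc n)" for l
  define A where "A k l = C (Suc (k div Suc n)) (l div Suc n) * D (Suc (k mod Suc n)) (l mod Suc n)" for k l
  show ?thesis
  proof (rule algebraic_int_eigenvalue_of_int_matrix)
    show "0 < Suc m * Suc n" "w 0 \<noteq> 0"
      by (simp_all add: w_def)
  next
    fix k
    define a b where "a = k div Suc n" and "b = k mod Suc n"
    have "(\<Sum>l<Suc m * Suc n. of_int (A k l) * w l)
        = (\<Sum>i<Suc m. \<Sum>j<Suc n. of_int (C (Suc a) i) * x ^ i * (of_int (D (Suc b) j) * y ^ j))"
      unfolding sum_lessThan_mult_nat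
    proof (intro sum.cong refl)
      fix i j
      assume "j \<in> {..<Suc n}"
      then have "(i * Suc n + j) div Suc n = i" "(i * Suc n + j) mod Suc n = j"
        by (auto simp del: mult_Suc_right)
      then show "of_int (A k (i * Suc n + j)) * w (i * Suc n + j)
          = of_int (C (Suc a) i) * x ^ i * (of_int (D (Suc b) j) * y ^ j)"
        by (simp add: A_def w_def a_def b_def mult_ac)
    qed
    also have "\<dots> = x ^ Suc a * y ^ Suc b"
      unfolding C[of "Suc a"] D[of "Suc b"] by (rule sum_product[symmetric])
    also have "\<dots> = x * y * w k"
      by (simp add: w_def a_def b_def)
    finally show "(\<Sum>l<Suc m * Suc n. of_int (A k l) * w l) = x * y * w k" .
  qed
qed

lemma algebraic_int_prod:
  fixes f :: "'b \<Rightarrow> 'a::field_char_0"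
  assumes "\<And>i. i \<in> A \<Longrightarrow> algebraic_int (f i)"
  shows "algebraic_int (\<Prod>i\<in>A. f i)"
  using assms by (induction A rule: infinite_finite_induct) (auto intro: algebraic_int_mult)

lemma algebraic_int_transfer:
  fixes x y :: "'a::field_char_0"
  assumes transfer: "\<And>p. \<forall>i. coeff p i \<in> \<rat> \<Longrightarrow> poly p x = 0 \<Longrightarrow> poly p y = 0"
    and "algebraic_int x"
  shows "algebraic_int y"
proof -
  obtain p where p: "lead_coeff p = 1" "\<forall>i. coeff p i \<in> \<int>" "poly p x = 0"
    using assms(2) by (auto simp: algebraic_int.simps)
  then have "poly p y = 0"
    using transfer Ints_subset_Rats by blast
  with p show ?thesis
    by (intro algebraic_int.intros) auto
qed

lemma rational_roots_transfer_inverse: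
  fixes x y :: "'a::field_char_0"
  assumes transfer: "\<And>p. \<forall>i. coeff p i \<in> \<rat> \<Longrightarrow> poly p x = 0 \<Longrightarrow> poly p y = 0"
    and "x \<noteq> 0" "y \<noteq> 0" and "\<forall>i. coeff p i \<in> \<rat>" "poly p (inverse x) = 0"
  shows "poly p (inverse y) = 0"
proof -
  have "poly (reflect_poly p) x = 0"
    using assms(2,5) by (simp add: poly_reflect_poly_nz)
  moreover have "\<forall>i. coeff (reflect_poly p) i \<in> \<rat>"
    using assms(4) by (simp add: coeff_reflect_poly)
  ultimately have "poly (reflect_poly p) y = 0"
    using transfer by blast
  then show ?thesis
    using assms(3) by (simp add: poly_reflect_poly_nz)
qed

lemma rational_algebraic_int_unit:
  fixes x :: "'a::field_char_0"
  assumes "x \<in> \<rat>" "x \<noteq> 0" "algebraic_int x" "algebraic_int (inverse x)"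
  shows "x = 1 \<or> x = -1"
proof -
  have "x \<in> \<int>" "inverse x \<in> \<int>"
    using assms(1,3,4) Rats_inverse rational_algebraic_int_is_int by blast+
  then obtain m k where m: "x = of_int m" and k: "inverse x = of_int k"
    by (auto elim!: Ints_cases)
  have "of_int (m * k) = (1 :: 'a)"
    using assms(2) by (simp flip: m k)
  then have "m * k = 1"
    by (simp only: of_int_eq_1_iff)
  then show ?thesis
    using m zmult_eq_1_iff by auto
qed

section \<open>Linear independence of square roots\<close>

lemma sqrt_of_int_in_Rats_imp_square:
  fixes D :: int
  assumes "D \<ge> 0" and "sqrt (of_int D) \<in> \<rat>"
  obtains k where "D = k\<^sup>2"
proof -
  have "algebraic_int (sqrt (of_int D :: real))"
    by (intro algebraic_int_sqrt) simp
  then have "sqrt (of_int D :: real) \<in> \<int>"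
    using assms(2) rational_algebraic_int_is_int by blast
  then obtain k where k: "sqrt (of_int D :: real) = of_int k"
    by (elim Ints_cases)
  have "(of_int D :: real) = (sqrt (of_int D))\<^sup>2"
    using assms(1) by simp
  then have "(of_int D :: real) = of_int (k\<^sup>2)"
    unfolding k by simp
  then show thesis
    using that of_int_eq_iff by blast
qed

lemma sqrt_squarefree_notin_Rats:
  fixes D :: int
  assumes "squarefree D" and "D > 1"
  shows "sqrt (of_int D) \<notin> \<rat>"
proof
  assume "sqrt (of_int D) \<in> \<rat>"
  moreover have "D \<ge> 0"
    using assms(2) by simp
  ultimately obtain k where k: "D = k\<^sup>2"
    using sqrt_of_int_in_Rats_imp_square by blast
  then have "\<bar>k\<bar> = 1"
    using assms(1) squarefreeD[of D k] by simp
  then have "k\<^sup>2 = 1"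
    using power2_abs[of k] by simp
  then show False
    using k assms(2) by simp
qed

lemma squarefree_mult_eq_square_imp_eq:
  fixes a b k :: int
  assumes "squarefree a" "squarefree b" "a > 0" "b > 0" and square: "a * b = k\<^sup>2"
  shows "a = b"
proof -
  have "k \<noteq> 0"
    using assms(3,4) square by auto
  have "multiplicity p a = multiplicity p b" if p: "prime p" for p
  proof -
    have "multiplicity p a \<le> 1" "multiplicity p b \<le> 1"
      using assms(1-4) p squarefree_factorial_semiring''[of a] squarefree_factorial_semiring''[of b]
      by auto
    moreover have "multiplicity p (a * b) = multiplicity p a + multiplicity p b"
      using p assms(3,4) by (intro prime_elem_multiplicity_mult_distrib) auto
    moreover have "multiplicity p (k\<^sup>2) = 2 * multiplicity p k"
      using p \<open>k \<noteq> 0\<close> by (intro prime_elem_multiplicity_power_distrib) auto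
    ultimately show ?thesis
      unfolding square by presburger
  qed
  then have "normalize a = normalize b"
    using assms(3,4) by (intro multiplicity_eq_imp_eq) auto
  then show ?thesis
    using assms(3,4) by simp
qed

lemma sqrt_mult_sqrt_notin_Rats:
  assumes "real_biquadratic D1 D2"
  shows "sqrt (of_int D1) * sqrt (of_int D2) \<notin> \<rat>"
proof
  assume "sqrt (of_int D1) * sqrt (of_int D2) \<in> \<rat>"
  then have "sqrt (of_int (D1 * D2)) \<in> \<rat>"
    by (simp add: real_sqrt_mult)
  moreover have "D1 * D2 \<ge> 0"
    using assms unfolding real_biquadratic_def by simp
  ultimately obtain k where "D1 * D2 = k\<^sup>2"
    using sqrt_of_int_in_Rats_imp_square by blast
  then have "D1 = D2"
    using assms unfolding real_biquadratic_def by (intro squarefree_mult_eq_square_imp_eq[of D1 D2 k]) auto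
  then show False
    using assms unfolding real_biquadratic_def by simp
qed

lemma Rats_combination_of_irrational_eq_0:
  fixes x a b :: "'a::field_char_0"
  assumes "x \<notin> \<rat>" "a \<in> \<rat>" "b \<in> \<rat>" and "a + b * x = 0"
  shows "a = 0 \<and> b = 0"
proof (cases "b = 0")
  case False
  have "b * x = - a"
    using assms(4) by (simp add: eq_neg_iff_add_eq_0 add.commute)
  then have "x = - a / b"
    using False by (metis nonzero_mult_div_cancel_left)
  then show ?thesis
    using assms(1-3) by simp
qed (use assms(4) in simp)

lemma Rats_quadratic_quotient:
  fixes x y a b c d :: "'a::field_char_0"
  assumes x: "x \<notin> \<rat>" and X: "x\<^sup>2 \<in> \<rat>" and rat: "a \<in> \<rat>" "b \<in> \<rat>" "c \<in> \<rat>" "d \<in> \<rat>"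
    and nonzero: "c + d * x \<noteq> 0" and eq: "(c + d * x) * y = a + b * x"
  obtains u w where "u \<in> \<rat>" "w \<in> \<rat>" "y = u + w * x"
proof -
  have "c - d * x \<noteq> 0"
    using Rats_combination_of_irrational_eq_0[of x c "- d"] x rat nonzero by auto
  define \<Delta> where "\<Delta> = c\<^sup>2 - d\<^sup>2 * x\<^sup>2"
  have \<Delta>: "\<Delta> = (c + d * x) * (c - d * x)"
    unfolding \<Delta>_def by (simp add: algebra_simps power2_eq_square)
  then have "\<Delta> \<noteq> 0"
    using nonzero \<open>c - d * x \<noteq> 0\<close> by simp
  define u where "u = (a * c - b * d * x\<^sup>2) / \<Delta>"
  define w where "w = (b * c - a * d) / \<Delta>"
  have "y * \<Delta> = (a + b * x) * (c - d * x)"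
    unfolding \<Delta> using eq by (metis mult.assoc mult.commute)
  also have "\<dots> = (u + w * x) * \<Delta>"
    using \<open>\<Delta> \<noteq> 0\<close> unfolding u_def w_def by (simp add: field_simps power2_eq_square)
  finally have "y = u + w * x"
    using \<open>\<Delta> \<noteq> 0\<close> by simp
  moreover have "u \<in> \<rat>" "w \<in> \<rat>"
    unfolding u_def w_def \<Delta>_def using rat X by auto
  ultimately show thesis
    using that by blast
qed

text \<open>If \<open>y\<close> were in \<open>\<rat>(x)\<close>, say \<open>y = u + w * x\<close>, squaring would give \<open>u * w = 0\<close>, making \<open>y\<close>
  or \<open>x * y\<close> rational.\<close>
lemma Rats_biquadratic_independent:
  fixes x y a b c d :: "'a::field_char_0"
  assumes x: "x \<notin> \<rat>" and y: "y \<notin> \<rat>" and xy: "x * y \<notin> \<rat>"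
    and X: "x\<^sup>2 \<in> \<rat>" and Y: "y\<^sup>2 \<in> \<rat>"
    and rat: "a \<in> \<rat>" "b \<in> \<rat>" "c \<in> \<rat>" "d \<in> \<rat>"
    and eq: "a + b * x + c * y + d * x * y = 0"
  shows "a = 0 \<and> b = 0 \<and> c = 0 \<and> d = 0"
proof (cases "c + d * x = 0")
  case True
  then have "c = 0 \<and> d = 0"
    using Rats_combination_of_irrational_eq_0 x rat by blast
  moreover from this have "a = 0 \<and> b = 0"
    using Rats_combination_of_irrational_eq_0 x rat eq by simp
  ultimately show ?thesis
    by blast
next
  case False
  have "(c + d * x) * y = - a + - b * x"
    using eq by (simp add: algebra_simps eq_neg_iff_add_eq_0)
  then obtain u w where u: "u \<in> \<rat>" and w: "w \<in> \<rat>" and y_eq: "y = u + w * x"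
    using Rats_quadratic_quotient[OF x X _ _ _ _ False] rat by (metis Rats_minus_iff)
  have "(u\<^sup>2 + w\<^sup>2 * x\<^sup>2 - y\<^sup>2) + (2 * u * w) * x = 0"
    unfolding y_eq by (simp add: algebra_simps power2_eq_square)
  moreover have "u\<^sup>2 + w\<^sup>2 * x\<^sup>2 - y\<^sup>2 \<in> \<rat>" "2 * u * w \<in> \<rat>"
    using u w X Y by simp_all
  ultimately have "u * w = 0"
    using Rats_combination_of_irrational_eq_0 x by fastforce
  moreover have "u \<noteq> 0"
  proof
    assume "u = 0"
    then have "x * y = w * x\<^sup>2"
      unfolding y_eq by (simp add: power2_eq_square)
    then show False
      using xy w X by simp
  qed
  moreover have "w \<noteq> 0"
    using y u y_eq by auto
  ultimately show ?thesis
    by simp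
qed

section \<open>Arithmetic in the biquadratic field\<close>

type_synonym bq = "rat \<times> rat \<times> rat \<times> rat"

lemma sg_nonzero [simp]: "sg s \<noteq> 0"
  and sg_in_Rats [simp]: "sg s \<in> \<rat>"
  by (cases s; simp add: sg_def)+

lemma bq_emb_eq_0_iff:
  assumes "real_biquadratic D1 D2"
  shows "bq_emb D1 D2 st q = 0 \<longleftrightarrow> q = (0, 0, 0, 0)"
proof
  obtain a b c d where q: "q = (a, b, c, d)"
    by (cases q) auto
  obtain s t where st: "st = (s, t)"
    by (cases st) auto
  let ?x = "sqrt (of_int D1) :: real" and ?y = "sqrt (of_int D2) :: real"
  have D: "D1 > 1" "D2 > 1" "squarefree D1" "squarefree D2"
    using assms unfolding real_biquadratic_def by auto
  assume "bq_emb D1 D2 st q = 0"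
  then have "of_rat a + (sg s * of_rat b) * ?x + (sg t * of_rat c) * ?y
      + (sg s * sg t * of_rat d) * ?x * ?y = 0"
    unfolding bq_emb_def q st by (simp add: mult_ac)
  then have "of_rat a = (0::real) \<and> sg s * of_rat b = (0::real) \<and> sg t * of_rat c = (0::real)
      \<and> sg s * sg t * of_rat d = (0::real)"
    using D sqrt_squarefree_notin_Rats sqrt_mult_sqrt_notin_Rats[OF assms]
    by (intro Rats_biquadratic_independent) auto
  then show "q = (0, 0, 0, 0)"
    unfolding q by simp
qed (simp add: bq_emb_def)

definition bq_mult :: "int \<Rightarrow> int \<Rightarrow> bq \<Rightarrow> bq \<Rightarrow> bq" where
  "bq_mult D1 D2 q r = (case q of (a, b, c, d) \<Rightarrow> case r of (e, f, g, h) \<Rightarrow>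
     (a * e + b * f * of_int D1 + c * g * of_int D2 + d * h * of_int D1 * of_int D2,
      a * f + b * e + (c * h + d * g) * of_int D2,
      a * g + c * e + (b * h + d * f) * of_int D1,
      a * h + d * e + b * g + c * f))"

lemma bq_mult_identity:
  fixes a b c d e f g h x y :: real
  shows "(a + sg s * b * x + sg t * c * y + sg s * sg t * d * x * y)
      * (e + sg s * f * x + sg t * g * y + sg s * sg t * h * x * y)
    = (a * e + b * f * (x * x) + c * g * (y * y) + d * h * (x * x) * (y * y))
      + sg s * (a * f + b * e + (c * h + d * g) * (y * y)) * x
      + sg t * (a * g + c * e + (b * h + d * f) * (x * x)) * y
      + sg s * sg t * (a * h + d * e + b * g + c * f) * x * y"
  by (cases s; cases t) (simp_all add: sg_def algebra_simps)

lemma bq_emb_bq_mult: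
  assumes "D1 \<ge> 0" "D2 \<ge> 0"
  shows "bq_emb D1 D2 st (bq_mult D1 D2 q r) = bq_emb D1 D2 st q * bq_emb D1 D2 st r"
proof -
  obtain a b c d where q: "q = (a, b, c, d)"
    by (cases q) auto
  obtain e f g h where r: "r = (e, f, g, h)"
    by (cases r) auto
  have "sqrt (of_int D1) * sqrt (of_int D1) = (of_int D1 :: real)"
    and "sqrt (of_int D2) * sqrt (of_int D2) = (of_int D2 :: real)"
    using assms by simp_all
  then show ?thesis
    unfolding q r bq_mult_def bq_emb_def by (simp add: bq_mult_identity of_rat_add of_rat_mult)
qed

lemma bq_emb_add_rat:
  "bq_emb D1 D2 st (r + a, b, c, d) = of_rat r + bq_emb D1 D2 st (a, b, c, d)"
  unfolding bq_emb_def by (simp add: of_rat_add)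

lemma bq_emb_rat: "bq_emb D1 D2 st (r, 0, 0, 0) = of_rat r"
  unfolding bq_emb_def by simp

lemma poly_bq_emb:
  fixes p :: "real poly"
  assumes "\<forall>i. coeff p i \<in> \<rat>" "D1 \<ge> 0" "D2 \<ge> 0"
  obtains z where "\<And>st. poly p (bq_emb D1 D2 st q) = bq_emb D1 D2 st z"
  using assms(1)
proof (induction p arbitrary: thesis)
  case 0
  show ?case
    by (rule "0.prems"(1)[of "(0, 0, 0, 0)"]) (simp add: bq_emb_rat)
next
  case (pCons p0 p)
  obtain r where r: "p0 = of_rat r"
    using pCons.prems(2) by (metis Rats_cases coeff_pCons_0)
  obtain z where z: "\<And>st. poly p (bq_emb D1 D2 st q) = bq_emb D1 D2 st z"
    using pCons.IH pCons.prems(2) by (metis coeff_pCons_Suc)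
  obtain a b c d where qz: "bq_mult D1 D2 q z = (a, b, c, d)"
    by (cases "bq_mult D1 D2 q z") auto
  show ?case
  proof (rule pCons.prems(1))
    fix st
    show "poly (pCons p0 p) (bq_emb D1 D2 st q) = bq_emb D1 D2 st (r + a, b, c, d)"
      using bq_emb_bq_mult[OF assms(2,3), of st q z]
      by (simp add: bq_emb_add_rat z r flip: qz)
  qed
qed

lemma poly_bq_emb_eq_0_transfer:
  fixes p :: "real poly"
  assumes bq: "real_biquadratic D1 D2" and "\<forall>i. coeff p i \<in> \<rat>"
    and "poly p (bq_emb D1 D2 st q) = 0"
  shows "poly p (bq_emb D1 D2 st' q) = 0"
proof -
  have "D1 \<ge> 0" "D2 \<ge> 0"
    using bq unfolding real_biquadratic_def by auto
  then obtain z where z: "\<And>st. poly p (bq_emb D1 D2 st q) = bq_emb D1 D2 st z"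
    using poly_bq_emb assms(2) by metis
  then show ?thesis
    using assms(3) bq_emb_eq_0_iff[OF bq] by metis
qed

lemma bq_unit_emb:
  assumes bq: "real_biquadratic D1 D2" and "bq_unit D1 D2 q"
  shows "bq_emb D1 D2 st q \<noteq> 0" and "algebraic_int (bq_emb D1 D2 st q)"
    and "algebraic_int (inverse (bq_emb D1 D2 st q))"
proof -
  let ?x = "bq_emb D1 D2 (True, True) q" and ?y = "bq_emb D1 D2 st q"
  have x: "?x \<noteq> 0" "algebraic_int ?x" "algebraic_int (inverse ?x)"
    using assms(2) unfolding bq_unit_def Let_def by auto
  then show y: "?y \<noteq> 0"
    using bq_emb_eq_0_iff[OF bq] by metis
  have transfer: "poly p ?y = 0" if "\<forall>i. coeff p i \<in> \<rat>" "poly p ?x = 0" for p :: "real poly"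
    using poly_bq_emb_eq_0_transfer[OF bq that] .
  show "algebraic_int ?y"
    using algebraic_int_transfer[OF transfer x(2)] by blast
  show "algebraic_int (inverse ?y)"
    using algebraic_int_transfer[OF rational_roots_transfer_inverse[OF transfer x(1) y] x(3)]
    by blast
qed

text \<open>The four embeddings form the Galois group \<open>{\<plusminus>1}\<^sup>2\<close>, with \<open>True\<close> for \<open>+1\<close>; the
  product of signs is then equality of booleans.\<close>
definition gal_mult :: "bool \<times> bool \<Rightarrow> bool \<times> bool \<Rightarrow> bool \<times> bool" where
  "gal_mult st w = (fst st = fst w, snd st = snd w)"

definition bq_conj :: "bool \<times> bool \<Rightarrow> bq \<Rightarrow> bq" where
  "bq_conj w q = (case q of (a, b, c, d) \<Rightarrow>
     (a, if fst w then b else - b, if snd w then c else - c, if fst w = snd w then d else - d))"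

lemma bq_emb_bq_conj: "bq_emb D1 D2 st (bq_conj w q) = bq_emb D1 D2 (gal_mult st w) q"
proof -
  obtain a b c d where q: "q = (a, b, c, d)"
    by (cases q) auto
  obtain s t where st: "st = (s, t)"
    by (cases st) auto
  obtain s' t' where w: "w = (s', t')"
    by (cases w) auto
  show ?thesis
    unfolding q st w bq_conj_def bq_emb_def gal_mult_def sg_def
    by (cases s; cases t; cases s'; cases t') (simp_all add: of_rat_minus)
qed

lemma bq_unit_mult:
  assumes bq: "real_biquadratic D1 D2" and "bq_unit D1 D2 q" "bq_unit D1 D2 r"
  shows "bq_unit D1 D2 (bq_mult D1 D2 q r)"
    and "bq_sgn D1 D2 (bq_mult D1 D2 q r) = (\<lambda>st. bq_sgn D1 D2 q st \<noteq> bq_sgn D1 D2 r st)"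
proof -
  have "D1 \<ge> 0" "D2 \<ge> 0"
    using bq unfolding real_biquadratic_def by auto
  note mult = bq_emb_bq_mult[OF this]
  note q = bq_unit_emb[OF bq assms(2)] and r = bq_unit_emb[OF bq assms(3)]
  show "bq_unit D1 D2 (bq_mult D1 D2 q r)"
    unfolding bq_unit_def Let_def mult using q r
    by (auto simp: inverse_mult_distrib intro!: algebraic_int_mult)
  show "bq_sgn D1 D2 (bq_mult D1 D2 q r) = (\<lambda>st. bq_sgn D1 D2 q st \<noteq> bq_sgn D1 D2 r st)"
    unfolding bq_sgn_def mult using q(1) r(1) by (auto simp: fun_eq_iff mult_less_0_iff linorder_neq_iff)
qed

lemma bq_unit_conj:
  assumes "real_biquadratic D1 D2" and "bq_unit D1 D2 q"
  shows "bq_unit D1 D2 (bq_conj w q)"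
    and "bq_sgn D1 D2 (bq_conj w q) = (\<lambda>st. bq_sgn D1 D2 q (gal_mult st w))"
proof -
  have "gal_mult (True, True) w = w"
    by (simp add: gal_mult_def)
  then show "bq_unit D1 D2 (bq_conj w q)"
    unfolding bq_unit_def Let_def bq_emb_bq_conj using bq_unit_emb[OF assms] by simp
  show "bq_sgn D1 D2 (bq_conj w q) = (\<lambda>st. bq_sgn D1 D2 q (gal_mult st w))"
    unfolding bq_sgn_def bq_emb_bq_conj ..
qed

lemma bq_unit_minus_one: "bq_unit D1 D2 (-1, 0, 0, 0)" "bq_sgn D1 D2 (-1, 0, 0, 0) = (\<lambda>_. True)"
  unfolding bq_unit_def bq_sgn_def by (simp_all add: bq_emb_rat)

section \<open>The norm of a unit\<close>

lemma UNIV_bool_prod: "(UNIV :: (bool \<times> bool) set) = {(True, True), (True, False), (False, True), (False, False)}"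
  by auto

lemma bq_norm_identity:
  fixes a b c d x y :: real
  shows "(a + b * x + c * y + d * x * y) * (a + b * x - c * y - d * x * y)
      * (a - b * x + c * y - d * x * y) * (a - b * x - c * y + d * x * y)
    = (a * a - b * b * (x * x) + c * c * (y * y) - d * d * (x * x) * (y * y))\<^sup>2
      - (y * y) * (2 * a * c - 2 * b * d * (x * x))\<^sup>2"
  by (simp add: algebra_simps power2_eq_square)

lemma bq_norm_eq:
  assumes "D1 \<ge> 0" "D2 \<ge> 0"
  shows "bq_norm D1 D2 (a, b, c, d) = of_rat
    ((a\<^sup>2 - b\<^sup>2 * of_int D1 + c\<^sup>2 * of_int D2 - d\<^sup>2 * of_int D1 * of_int D2)\<^sup>2
      - of_int D2 * (2 * a * c - 2 * b * d * of_int D1)\<^sup>2)"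
proof -
  let ?x = "sqrt (of_int D1) :: real" and ?y = "sqrt (of_int D2) :: real"
  have x: "?x * ?x = of_int D1" and y: "?y * ?y = of_int D2"
    using assms by simp_all
  have "bq_norm D1 D2 (a, b, c, d)
      = (of_rat a + of_rat b * ?x + of_rat c * ?y + of_rat d * ?x * ?y)
      * (of_rat a + of_rat b * ?x - of_rat c * ?y - of_rat d * ?x * ?y)
      * (of_rat a - of_rat b * ?x + of_rat c * ?y - of_rat d * ?x * ?y)
      * (of_rat a - of_rat b * ?x - of_rat c * ?y + of_rat d * ?x * ?y)"
    unfolding bq_norm_def UNIV_bool_prod bq_emb_def sg_def by (simp add: mult.assoc)
  also have "\<dots> = of_rat ((a\<^sup>2 - b\<^sup>2 * of_int D1 + c\<^sup>2 * of_int D2 - d\<^sup>2 * of_int D1 * of_int D2)\<^sup>2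
      - of_int D2 * (2 * a * c - 2 * b * d * of_int D1)\<^sup>2)"
    unfolding bq_norm_identity x y by (simp add: of_rat_add of_rat_mult of_rat_diff of_rat_power power2_eq_square)
  finally show ?thesis .
qed

lemma bq_norm_unit:
  assumes bq: "real_biquadratic D1 D2" and "bq_unit D1 D2 q"
  shows "bq_norm D1 D2 q = 1 \<or> bq_norm D1 D2 q = -1"
proof (rule rational_algebraic_int_unit)
  show "bq_norm D1 D2 q \<in> \<rat>"
    using bq bq_norm_eq[of D1 D2] unfolding real_biquadratic_def by (cases q) auto
  show "bq_norm D1 D2 q \<noteq> 0"
    unfolding bq_norm_def using bq_unit_emb(1)[OF assms] by simp
  show "algebraic_int (bq_norm D1 D2 q)"
    unfolding bq_norm_def using bq_unit_emb(2)[OF assms] by (rule algebraic_int_prod)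
  show "algebraic_int (inverse (bq_norm D1 D2 q))"
    unfolding bq_norm_def prod_inversef[symmetric] comp_def
    using bq_unit_emb(3)[OF assms] by (rule algebraic_int_prod)
qed

lemma prod_neg_iff_odd_card_neg:
  fixes f :: "'b \<Rightarrow> 'a::linordered_idom"
  assumes "finite A" and "\<And>i. i \<in> A \<Longrightarrow> f i \<noteq> 0"
  shows "prod f A < 0 \<longleftrightarrow> odd (card {i \<in> A. f i < 0})"
  using assms
proof (induction A rule: finite_induct)
  case (insert j A)
  have "prod f A \<noteq> 0" "f j \<noteq> 0"
    using insert by (auto simp: prod_zero_iff)
  then have signs: "prod f A < 0 \<or> prod f A > 0" "f j < 0 \<or> f j > 0"
    by (auto simp: linorder_neq_iff)
  have "{i \<in> insert j A. f i < 0} = (if f j < 0 then insert j {i \<in> A. f i < 0} else {i \<in> A. f i < 0})"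
    by auto
  then show ?case
    using insert signs by (auto simp: mult_less_0_iff)
qed simp

lemma bq_norm_neg_iff:
  assumes "real_biquadratic D1 D2" and "bq_unit D1 D2 q"
  shows "bq_norm D1 D2 q < 0 \<longleftrightarrow> odd (card {st. bq_sgn D1 D2 q st})"
  unfolding bq_norm_def bq_sgn_def using bq_unit_emb(1)[OF assms]
  by (subst prod_neg_iff_odd_card_neg) auto

section \<open>Signature vectors\<close>

lemma card_f2_span_le:
  assumes "finite S"
  shows "card (f2_span S) \<le> 2 ^ card S"
proof -
  have "f2_span S = (\<lambda>T i. odd (card {v \<in> T. v i})) ` Pow S"
    unfolding f2_span_def using assms by (auto intro: finite_subset)
  then have "card (f2_span S) \<le> card (Pow S)"
    using assms by (simp add: card_image_le)
  then show ?thesis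
    using assms by (simp add: card_Pow)
qed

lemma card_le_f2_dim_UNIV: "CARD('i) \<le> f2_dim (UNIV :: ('i::finite \<Rightarrow> bool) set)"
proof -
  let ?P = "\<lambda>n. \<exists>S. finite S \<and> card S = n \<and> f2_span S = (UNIV :: ('i \<Rightarrow> bool) set)"
  have "f \<in> f2_span {f}" for f :: "'i \<Rightarrow> bool"
  proof -
    have "{v \<in> {f}. v i} = (if f i then {f} else {})" for i
      by auto
    then have "f = (\<lambda>i. odd (card {v \<in> {f}. v i}))"
      by auto
    then show ?thesis
      unfolding f2_span_def by blast
  qed
  then have "f2_span UNIV = (UNIV :: ('i \<Rightarrow> bool) set)"
    unfolding f2_span_def by blast
  then have "?P (f2_dim (UNIV :: ('i \<Rightarrow> bool) set))"
    unfolding f2_dim_def by (intro LeastI[of ?P "card (UNIV :: ('i \<Rightarrow> bool) set)"]) auto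
  then obtain S :: "('i \<Rightarrow> bool) set"
    where S: "finite S" "card S = f2_dim (UNIV :: ('i \<Rightarrow> bool) set)" "f2_span S = UNIV"
    by blast
  have "(2::nat) ^ CARD('i) = card (UNIV :: ('i \<Rightarrow> bool) set)"
    by (simp add: card_fun)
  also have "\<dots> \<le> 2 ^ card S"
    using card_f2_span_le[OF S(1)] S(3) by simp
  finally show ?thesis
    using S(2) by (simp add: power_le_imp_le_exp)
qed

lemma odd_weight_bool_prod:
  fixes v :: "bool \<times> bool \<Rightarrow> bool"
  assumes "odd (card {i. v i})"
  obtains k where "v = (\<lambda>i. i = k) \<or> v = (\<lambda>i. i \<noteq> k)"
proof -
  have "card {i. v i} \<le> CARD(bool \<times> bool)"
    by (rule card_mono) auto
  then have "card {i. v i} \<le> 4"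
    by (simp add: card_UNIV_bool)
  moreover have "n = 1 \<or> n = 3" if "n \<le> 4" "odd n" for n :: nat
    using that by presburger
  ultimately consider "card {i. v i} = 1" | "card (- {i. v i}) = 1"
    using assms by (force simp: Compl_eq_Diff_UNIV card_Diff_subset card_UNIV_bool)
  then show thesis
  proof cases
    case 1
    then obtain k where "{i. v i} = {k}"
      by (rule card_1_singletonE)
    then show thesis
      using that[of k] by (auto simp: set_eq_iff fun_eq_iff)
  next
    case 2
    then obtain k where "- {i. v i} = {k}"
      by (rule card_1_singletonE)
    then show thesis
      using that[of k] by (auto simp: set_eq_iff fun_eq_iff)
  qed
qed

lemma gal_invariant_subgroup_eq_UNIV:
  fixes G :: "(bool \<times> bool \<Rightarrow> bool) set"
  assumes xor: "\<And>f g. f \<in> G \<Longrightarrow> g \<in> G \<Longrightarrow> (\<lambda>i. f i \<noteq> g i) \<in> G"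
    and gal: "\<And>f w. f \<in> G \<Longrightarrow> (\<lambda>i. f (gal_mult i w)) \<in> G"
    and all_true: "(\<lambda>_. True) \<in> G" and v: "v \<in> G" and odd: "odd (card {i. v i})"
  shows "G = UNIV"
proof -
  obtain k where "v = (\<lambda>i. i = k) \<or> v = (\<lambda>i. i \<noteq> k)"
    using odd_weight_bool_prod[OF odd] .
  moreover have "(\<lambda>i. v i \<noteq> True) \<in> G"
    using xor[OF v all_true] .
  ultimately have k: "(\<lambda>i. i = k) \<in> G"
    using v by auto
  have singleton: "(\<lambda>i. i = j) \<in> G" for j
  proof -
    have "(\<lambda>i. gal_mult i (gal_mult j k) = k) = (\<lambda>i. i = j)"
      by (auto simp: gal_mult_def fun_eq_iff prod_eq_iff)
    then show ?thesis
      using gal[OF k, of "gal_mult j k"] by simp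
  qed
  have "(\<lambda>i. i \<in> T) \<in> G" for T :: "(bool \<times> bool) set"
    using finite[of T]
  proof (induction T rule: finite_induct)
    case empty
    show ?case
      using xor[OF v v] by simp
  next
    case (insert j T)
    have "(\<lambda>i. i \<in> insert j T) = (\<lambda>i. (i = j) \<noteq> (i \<in> T))"
      using insert.hyps(2) by auto
    then show ?case
      using xor[OF singleton insert.IH] by simp
  qed
  from this[of "{i. f i}" for f] show ?thesis
    by auto
qed

lemma unit_sgn_group_xor:
  assumes "real_biquadratic D1 D2" and "f \<in> unit_sgn_group D1 D2" "g \<in> unit_sgn_group D1 D2"
  shows "(\<lambda>st. f st \<noteq> g st) \<in> unit_sgn_group D1 D2"
proof -
  obtain q r where "bq_unit D1 D2 q" "f = bq_sgn D1 D2 q" "bq_unit D1 D2 r" "g = bq_sgn D1 D2 r"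
    using assms(2,3) unfolding unit_sgn_group_def by auto
  then show ?thesis
    unfolding unit_sgn_group_def
    by (intro image_eqI[of _ _ "bq_mult D1 D2 q r"]) (simp_all add: bq_unit_mult[OF assms(1)])
qed

lemma unit_sgn_group_gal:
  assumes "real_biquadratic D1 D2" and "f \<in> unit_sgn_group D1 D2"
  shows "(\<lambda>st. f (gal_mult st w)) \<in> unit_sgn_group D1 D2"
proof -
  obtain q where "bq_unit D1 D2 q" "f = bq_sgn D1 D2 q"
    using assms(2) unfolding unit_sgn_group_def by auto
  then show ?thesis
    unfolding unit_sgn_group_def
    by (intro image_eqI[of _ _ "bq_conj w q"]) (simp_all add: bq_unit_conj[OF assms(1)])
qed

lemma unit_sgn_group_all_neg: "(\<lambda>_. True) \<in> unit_sgn_group D1 D2"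
  unfolding unit_sgn_group_def
  by (intro image_eqI[of _ _ "(-1, 0, 0, 0)"]) (simp_all add: bq_unit_minus_one)

theorem lemma3p2:
  fixes D1 D2 :: int and \<eta> :: "rat \<times> rat \<times> rat \<times> rat"
  assumes "real_biquadratic D1 D2"
    and "sgnrk D1 D2 \<le> 3"
    and "bq_unit D1 D2 \<eta>"
  shows "bq_norm D1 D2 \<eta> = 1"
proof (rule ccontr)
  assume "bq_norm D1 D2 \<eta> \<noteq> 1"
  then have "bq_norm D1 D2 \<eta> < 0"
    using bq_norm_unit[OF assms(1,3)] by auto
  then have odd: "odd (card {st. bq_sgn D1 D2 \<eta> st})"
    using bq_norm_neg_iff[OF assms(1,3)] by blast
  have "unit_sgn_group D1 D2 = UNIV"
  proof (rule gal_invariant_subgroup_eq_UNIV)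
    show "bq_sgn D1 D2 \<eta> \<in> unit_sgn_group D1 D2"
      using assms(3) unfolding unit_sgn_group_def by simp
  qed (use odd unit_sgn_group_xor[OF assms(1)] unit_sgn_group_gal[OF assms(1)]
      unit_sgn_group_all_neg in auto)
  then have "CARD(bool \<times> bool) \<le> sgnrk D1 D2"
    unfolding sgnrk_def by (metis card_le_f2_dim_UNIV)
  with assms(2) show False
    by (simp add: card_UNIV_bool)
qed

end
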